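(* Let $X$ be a supertropical semiring and $a\in X$. (1) The fiber $\nu^{-1}(a)$ is non-empty if and only if $a\in\nu X$; in this case $a$ is the largest element of $\nu^{-1}(a)$ with respect to the intrinsic order. (2) Any two distinct elements of $\nu^{-1}(a)\setminus\{a\}$ are incomparable in the intrinsic order.
   Context: A semiring $(X,+,0,\cdot)$: $(X,+,0)$ commutative monoid, $(X,\cdot)$ semigroup, distributivity, $0$ absorbing. Intrinsic order: $a\le b$ iff $a+x=b$ for some $x$. $\nu:X\to X$, $\nu(x)=x+x$; $\nu X=\{a: a=a+a\}$. A supertropical semiring is a unital commutative semiring with $2=4$ (where $n=1+\dots+1$), such that $a+b\in\{a,b\}$ whenever $\nu(a)\ne\nu(b)$, and $a+b=\nu(a)$ whenever $\nu(a)=\nu(b)$. *)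

theory Defs
  imports Main
begin

definition ileq :: "'a::comm_semiring_1 \<Rightarrow> 'a \<Rightarrow> bool" where
  "ileq a b \<longleftrightarrow> (\<exists>x. a + x = b)"

definition nu :: "'a::comm_semiring_1 \<Rightarrow> 'a" where
  "nu x = x + x"

definition nuX :: "'a::comm_semiring_1 set" where
  "nuX = {a. a = a + a}"

definition supertropical :: "'a::comm_semiring_1 itself \<Rightarrow> bool" where
  "supertropical _ \<longleftrightarrow>
     (2::'a) = 4 \<and>
     (\<forall>a b::'a. nu a \<noteq> nu b \<longrightarrow> a + b = a \<or> a + b = b) \<and>
     (\<forall>a b::'a. nu a = nu b \<longrightarrow> a + b = nu a)"

end

theory Submission
  imports Defs
begin

text \<open>Since \<open>2 = 4\<close>, every ghost \<open>\<nu> x = 2x\<close> satisfies \<open>\<nu>(\<nu> x) = 4x = 2x\<close>, so the fibre over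
  \<open>a\<close> is non-empty exactly for ghosts, and then \<open>a = \<nu> a\<close> lies in it and dominates each
  \<open>y \<in> \<nu>\<^sup>-\<^sup>1(a)\<close> as \<open>y + y = a\<close>. If \<open>x + z = y\<close> for distinct non-ghost \<open>x, y\<close> of the fibre,
  then \<open>\<nu> z = \<nu> x\<close> would make \<open>y\<close> the ghost \<open>\<nu> x\<close>, and otherwise bipotence gives \<open>y = z\<close>,
  which again forces \<open>\<nu> z = \<nu> x\<close>.\<close>

lemma nu_eq_two_mult: "nu x = 2 * x"
  by (simp add: nu_def mult_2)

lemma ileq_nu: "ileq x (nu x)"
  by (auto simp: ileq_def nu_def)

lemma nuX_iff_nu_eq: "a \<in> nuX \<longleftrightarrow> nu a = a"
  by (auto simp: nuX_def nu_def)

lemma nu_nu: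
  fixes x :: "'a::comm_semiring_1"
  assumes "supertropical TYPE('a)"
  shows "nu (nu x) = nu x"
proof -
  have "(2::'a) * 2 = 4" by simp
  also have "\<dots> = 2" using assms by (simp add: supertropical_def)
  finally have "(2::'a) * 2 = 2" .
  then show ?thesis
    by (metis nu_eq_two_mult mult.assoc)
qed

lemma nu_fiber_nonempty_iff:
  fixes a :: "'a::comm_semiring_1"
  assumes "supertropical TYPE('a)"
  shows "{x. nu x = a} \<noteq> {} \<longleftrightarrow> a \<in> nuX"
  using nu_nu[OF assms] by (auto simp: nuX_iff_nu_eq)

lemma nu_fiber_incomparable:
  fixes x y :: "'a::comm_semiring_1"
  assumes "supertropical TYPE('a)"
    and fiber: "nu x = nu y" and "y \<noteq> nu y" and "x \<noteq> y"
  shows "\<not> ileq x y"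
proof
  assume "ileq x y"
  then obtain z where sum: "x + z = y" by (auto simp: ileq_def)
  have bipotent: "nu x \<noteq> nu z \<Longrightarrow> x + z = x \<or> x + z = z"
    and ghost_sum: "nu x = nu z \<Longrightarrow> x + z = nu x"
    using assms(1) by (auto simp: supertropical_def)
  show False
  proof (cases "nu x = nu z")
    case True
    then show False using ghost_sum sum fiber \<open>y \<noteq> nu y\<close> by simp
  next
    case False
    with bipotent sum \<open>x \<noteq> y\<close> have "z = y" by auto
    with False fiber show False by simp
  qed
qed

theorem lemma5p4:
  fixes a :: "'a::comm_semiring_1"
  assumes "supertropical TYPE('a)"
  shows "({x. nu x = a} \<noteq> {} \<longleftrightarrow> a \<in> nuX)
    \<and> (a \<in> nuX \<longrightarrow> a \<in> {x. nu x = a} \<and> (\<forall>y \<in> {x. nu x = a}. ileq y a))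
    \<and> (\<forall>x \<in> {x. nu x = a} - {a}. \<forall>y \<in> {x. nu x = a} - {a}.
          x \<noteq> y \<longrightarrow> \<not> ileq x y \<and> \<not> ileq y x)"
proof (intro conjI impI ballI)
  show "{x. nu x = a} \<noteq> {} \<longleftrightarrow> a \<in> nuX"
    using nu_fiber_nonempty_iff[OF assms] .
next
  assume "a \<in> nuX"
  then show "a \<in> {x. nu x = a}" by (simp add: nuX_iff_nu_eq)
  show "ileq y a" if "y \<in> {x. nu x = a}" for y
    using that ileq_nu[of y] by simp
next
  fix x y
  assume "x \<in> {x. nu x = a} - {a}" "y \<in> {x. nu x = a} - {a}" "x \<noteq> y"
  then show "\<not> ileq x y" "\<not> ileq y x"
    using nu_fiber_incomparable[OF assms] by auto
qed

end
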